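(* Let $g(x)=1-(1-x^2)^4$ for $|x|\le1$ and $g(x)=1$ otherwise. Fix $0<p_o<\widetilde{p_o}<2$ and let $(q,p)$, respectively $(\widetilde q,\widetilde p)$, be the global solutions of $\dot q=p$, $\dot p=-g'(q)$ with initial data $(0,p_o)$, respectively $(0,\widetilde{p_o})$. Then: (i) if $p_o\in]0,\sqrt2[$, then $q(t)<\widetilde q(t)$ for all $t\in]0,\mathcal{T}(p_o)/2]$; (ii) if $p_o\in[\sqrt2,2[$, then $q(t)<\widetilde q(t)$ for all $t\in]0,+\infty[$.
   Context: For $p_o\in]0,\sqrt2[$, the solution $q$ of $\dot q=p$, $\dot p=-g'(q)$ with $(q(0),p(0))=(0,p_o)$ is periodic, and $\mathcal{T}(p_o)$ denotes its smallest period. *)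

theory Defs
  imports "HOL-Analysis.Analysis"
begin

definition g :: "real \<Rightarrow> real" where
  "g x = (if \<bar>x\<bar> \<le> 1 then 1 - (1 - x\<^sup>2) ^ 4 else 1)"

definition is_global_solution :: "real \<Rightarrow> (real \<Rightarrow> real) \<Rightarrow> (real \<Rightarrow> real) \<Rightarrow> bool" where
  "is_global_solution p0 q p \<longleftrightarrow>
     q 0 = 0 \<and> p 0 = p0 \<and>
     (\<forall>t. (q has_real_derivative p t) (at t)) \<and>
     (\<forall>t. (p has_real_derivative - deriv g (q t)) (at t))"

definition smallest_period :: "(real \<Rightarrow> real) \<Rightarrow> real" where
  "smallest_period f = (LEAST T. T > 0 \<and> (\<forall>t. f (t + T) = f t))"

end

(*
  By energy conservation p\<^sup>2 + 2 g(q) = p0\<^sup>2, at a crossing q = q' the solution with the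
  larger initial speed is faster, so as long as p' > 0 every zero of q' - q is an upcrossing
  and q < q' persists.  If p0' \<ge> sqrt 2, the speed p' never vanishes: it could only do so on
  the plateau |q'| \<ge> 1 of g, where g' = 0 and uniqueness would make q' constant.
  If p0' < sqrt 2, both solutions oscillate, with amplitudes A < A' reached at the quarter
  periods \<tau> and \<tau>'.  At equal rescaled positions q/A = q'/A' the rescaled speed p/A exceeds
  p'/A', hence q/A stays ahead of q'/A' and \<tau> < \<tau>'.  So q < q' on ]0, \<tau>'[, and on
  [\<tau>', 2\<tau>] by reflecting both solutions at their turning times.
*)

theory Submission
  imports Defs
begin

section \<open>The potential\<close>

definition g' :: "real \<Rightarrow> real" where
  "g' x = (if \<bar>x\<bar> \<le> 1 then 8 * x * (1 - x\<^sup>2) ^ 3 else 0)"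

lemma g_eq_1: "1 \<le> \<bar>x\<bar> \<Longrightarrow> g x = 1"
  by (auto simp: g_def abs_le_iff power2_eq_square abs_if split: if_splits)

lemma g'_eq_0: "1 \<le> \<bar>x\<bar> \<Longrightarrow> g' x = 0"
  by (auto simp: g'_def abs_le_iff power2_eq_square abs_if split: if_splits)

lemma g_less_1: "\<bar>x\<bar> < 1 \<Longrightarrow> g x < 1"
  using abs_square_less_1[of x] by (simp add: g_def)

lemma g'_minus: "g' (- x) = - g' x"
  by (simp add: g'_def)

lemma has_real_derivative_g: "(g has_real_derivative g' x) (at x)"
proof -
  let ?S = "{-1..1::real}" and ?T = "- {-1..1::real}"
  have "?T = {..< -1} \<union> {1<..}"
    by auto
  then have "closure ?T = {..-1} \<union> {1..}"
    by (simp add: closure_Un)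
  then have boundary: "x \<in> {-1, 1}" if "x \<in> closure ?S" "x \<in> closure ?T" for x
    using that by auto
  have "((\<lambda>x. if x \<in> ?S then 1 - (1 - x\<^sup>2) ^ 4 else 1) has_derivative
      (if x \<in> ?S then (*) (8 * x * (1 - x\<^sup>2) ^ 3) else (*) 0)) (at x within (?S \<union> ?T))"
  proof (rule has_derivative_If_within_closures)
    have "((\<lambda>x. 1 - (1 - x\<^sup>2) ^ 4) has_real_derivative 8 * x * (1 - x\<^sup>2) ^ 3) (at x)"
      by (auto intro!: derivative_eq_intros simp: algebra_simps)
    then show "((\<lambda>x. 1 - (1 - x\<^sup>2) ^ 4) has_derivative (*) (8 * x * (1 - x\<^sup>2) ^ 3))
         (at x within ?S \<union> (closure ?S \<inter> closure ?T))"
      unfolding has_field_derivative_def by (rule has_derivative_at_withinI)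
    have "(*) (0::real) = (\<lambda>x. 0)"
      by (simp add: fun_eq_iff)
    then show "((\<lambda>x. 1) has_derivative (*) 0) (at x within ?T \<union> (closure ?S \<inter> closure ?T))"
      by simp
    show "1 - (1 - x\<^sup>2) ^ 4 = 1" "(*) (8 * x * (1 - x\<^sup>2) ^ 3) = (*) 0"
      if "x \<in> closure ?S" "x \<in> closure ?T"
      using boundary[OF that] by auto
  qed auto
  moreover have "?S \<union> ?T = UNIV"
    by auto
  moreover have "g = (\<lambda>x. if x \<in> ?S then 1 - (1 - x\<^sup>2) ^ 4 else 1)"
    by (auto simp: g_def fun_eq_iff abs_le_iff)
  ultimately have "(g has_derivative (if x \<in> ?S then (*) (8 * x * (1 - x\<^sup>2) ^ 3) else (*) 0)) (at x)"
    by simp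
  then show ?thesis
    by (cases "x \<in> ?S") (auto simp: g'_def abs_le_iff has_field_derivative_def)
qed

lemma deriv_g: "deriv g = g'"
  using has_real_derivative_g DERIV_imp_deriv by blast

lemma g'_lipschitz: "\<bar>g' a - g' b\<bar> \<le> 56 * \<bar>a - b\<bar>"
proof -
  define clamp :: "real \<Rightarrow> real" where "clamp x = max (-1) (min 1 x)" for x
  define P :: "real \<Rightarrow> real" where "P x = 8 * x * (1 - x\<^sup>2) ^ 3" for x
  have P_deriv_bound: "norm (8 * (1 - z\<^sup>2)\<^sup>2 * (1 - 7 * z\<^sup>2)) \<le> 56" if "z \<in> {-1..1}" for z :: real
  proof -
    have z2: "0 \<le> z\<^sup>2" "z\<^sup>2 \<le> 1"
      using that by (auto simp: abs_square_le_1)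
    then have "(1 - z\<^sup>2)\<^sup>2 \<le> 1"
      by (simp add: power_le_one)
    moreover have "\<bar>1 - 7 * z\<^sup>2\<bar> \<le> 7"
      using z2 by arith
    ultimately have "8 * (1 - z\<^sup>2)\<^sup>2 * \<bar>1 - 7 * z\<^sup>2\<bar> \<le> 8 * 1 * 7"
      by (intro mult_mono) auto
    then show ?thesis
      by (simp add: abs_mult)
  qed
  have "(P has_real_derivative 8 * (1 - z\<^sup>2)\<^sup>2 * (1 - 7 * z\<^sup>2)) (at z within {-1..1})" for z
    unfolding P_def
    by (auto intro!: derivative_eq_intros simp: algebra_simps power2_eq_square power3_eq_cube)
  then have P_lipschitz: "\<bar>P x - P y\<bar> \<le> 56 * \<bar>x - y\<bar>" if "x \<in> {-1..1}" "y \<in> {-1..1}" for x y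
    using field_differentiable_bound[where f = P and f' = "\<lambda>z. 8 * (1 - z\<^sup>2)\<^sup>2 * (1 - 7 * z\<^sup>2)",
        OF convex_real_interval(5) _ P_deriv_bound that]
    by simp
  have "g' x = P (clamp x)" for x
    by (auto simp: g'_def P_def clamp_def max_def min_def)
  then have "\<bar>g' a - g' b\<bar> \<le> 56 * \<bar>clamp a - clamp b\<bar>"
    using P_lipschitz by (simp add: clamp_def)
  also have "\<dots> \<le> 56 * \<bar>a - b\<bar>"
    by (auto simp: clamp_def max_def min_def)
  finally show ?thesis .
qed

lemma g_mono_on_unit_interval:
  assumes "0 \<le> x" "x \<le> y" "y \<le> 1"
  shows "g x \<le> g y"
proof -
  have "x\<^sup>2 \<le> y\<^sup>2" "y\<^sup>2 \<le> 1"
    using assms by (auto intro: power_mono power_le_one)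
  then show ?thesis
    using assms by (auto simp: g_def intro!: power_mono)
qed

section \<open>Sign lemmas for real functions\<close>

lemma gronwall_eq_0:
  fixes u u' :: "real \<Rightarrow> real"
  assumes deriv: "\<And>t. (u has_real_derivative u' t) (at t)"
    and bound: "\<And>t. \<bar>u' t\<bar> \<le> L * u t"
    and nonneg: "\<And>t. 0 \<le> u t"
    and "u t0 = 0"
  shows "u t = 0"
proof -
  have weighted_deriv: "((\<lambda>s. u s * exp (c * s)) has_real_derivative (u' s + c * u s) * exp (c * s)) (at s)"
    for c s
    using deriv[of s] by (auto intro!: derivative_eq_intros simp: algebra_simps)
  have "u t \<le> 0"
  proof (cases "t0 \<le> t")
    case True
    have "u t * exp (- L * t) \<le> u t0 * exp (- L * t0)"
    proof (rule DERIV_nonpos_imp_nonincreasing[OF True])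
      fix s
      have "(u' s + - L * u s) * exp (- L * s) \<le> 0"
        using bound[of s] by (intro mult_nonpos_nonneg) auto
      then show "\<exists>y. ((\<lambda>s. u s * exp (- L * s)) has_real_derivative y) (at s) \<and> y \<le> 0"
        using weighted_deriv by blast
    qed
    then show ?thesis
      using \<open>u t0 = 0\<close> by (simp add: mult_le_0_iff)
  next
    case False
    have "u t * exp (L * t) \<le> u t0 * exp (L * t0)"
    proof (rule DERIV_nonneg_imp_nondecreasing[of t t0 "\<lambda>s. u s * exp (L * s)"])
      show "t \<le> t0"
        using False by simp
      fix s
      have "0 \<le> (u' s + L * u s) * exp (L * s)"
        using bound[of s] by (intro mult_nonneg_nonneg) auto
      then show "\<exists>y. ((\<lambda>s. u s * exp (L * s)) has_real_derivative y) (at s) \<and> 0 \<le> y"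
        using weighted_deriv by blast
    qed
    then show ?thesis
      using \<open>u t0 = 0\<close> by (simp add: mult_le_0_iff)
  qed
  then show ?thesis
    using nonneg[of t] by linarith
qed

lemma first_zero_exists:
  fixes f :: "real \<Rightarrow> real"
  assumes cont: "\<And>t. isCont f t" and "0 < f a" "a \<le> b" "f b \<le> 0"
  shows "\<exists>c. a < c \<and> c \<le> b \<and> f c = 0 \<and> (\<forall>t. a \<le> t \<and> t < c \<longrightarrow> 0 < f t)"
proof -
  define K where "K = {a..b} \<inter> {t. f t \<le> 0}"
  have "closed K"
    unfolding K_def using cont
    by (intro closed_Int closed_Collect_le) (auto intro: continuous_at_imp_continuous_on)
  moreover have "b \<in> K" "bdd_below K"
    using assms by (auto simp: K_def bdd_below_def)
  ultimately have "Inf K \<in> K"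
    using closed_contains_Inf by blast
  define c where "c = Inf K"
  have c: "a \<le> c" "c \<le> b" "f c \<le> 0"
    using \<open>Inf K \<in> K\<close> by (auto simp: K_def c_def)
  have pos: "0 < f t" if "a \<le> t" "t < c" for t
  proof (rule ccontr)
    assume "\<not> 0 < f t"
    then have "t \<in> K"
      using that c by (auto simp: K_def)
    then show False
      using cInf_lower[OF _ \<open>bdd_below K\<close>, of t] that by (simp add: c_def)
  qed
  obtain z where z: "a \<le> z" "z \<le> c" "f z = 0"
    using IVT2[of f c 0 a] c \<open>0 < f a\<close> cont by auto
  then have "z = c"
    using pos[of z] by fastforce
  moreover have "a \<noteq> c"
    using c \<open>0 < f a\<close> by auto
  ultimately show ?thesis
    using z c pos by force
qed

lemma pos_if_zeros_are_upcrossings: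
  fixes d d' :: "real \<Rightarrow> real"
  assumes deriv: "\<And>t. (d has_real_derivative d' t) (at t)"
    and "d a = 0"
    and upcrossing: "\<And>t. a \<le> t \<Longrightarrow> t < b \<Longrightarrow> d t = 0 \<Longrightarrow> 0 < d' t"
    and "a < t" "t < b"
  shows "0 < d t"
proof (rule ccontr)
  assume "\<not> 0 < d t"
  have cont: "isCont d x" for x
    using deriv DERIV_isCont by blast
  have "0 < d' a"
    using upcrossing \<open>d a = 0\<close> \<open>a < t\<close> \<open>t < b\<close> by simp
  then obtain e where e: "0 < e" "\<And>h. 0 < h \<Longrightarrow> h < e \<Longrightarrow> d a < d (a + h)"
    using DERIV_pos_inc_right[OF deriv] by blast
  define c where "c = a + min e (t - a) / 2"
  have "0 < min e (t - a) / 2" "min e (t - a) / 2 < e" "min e (t - a) / 2 < t - a"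
    using e(1) \<open>a < t\<close> by auto
  then have "a < c" "c < t" "0 < d c"
    using e(2)[of "min e (t - a) / 2"] \<open>d a = 0\<close> by (simp_all add: c_def)
  then obtain t1 where t1: "c < t1" "t1 \<le> t" "d t1 = 0"
    and pos: "\<forall>s. c \<le> s \<and> s < t1 \<longrightarrow> 0 < d s"
    using first_zero_exists[OF cont, of c t] \<open>\<not> 0 < d t\<close> by auto
  have "0 < d' t1"
    using upcrossing t1 \<open>a < c\<close> \<open>t < b\<close> by simp
  then obtain e1 where e1: "0 < e1" "\<And>h. 0 < h \<Longrightarrow> h < e1 \<Longrightarrow> d (t1 - h) < d t1"
    using DERIV_pos_inc_left[OF deriv] by blast
  define h where "h = min e1 (t1 - c) / 2"
  have "0 < h" "h < e1" "h < t1 - c"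
    using e1(1) t1(1) by (auto simp: h_def)
  then have "0 < d (t1 - h)" "d (t1 - h) < 0"
    using pos e1(2)[of h] t1(3) by auto
  then show False
    by simp
qed

lemma neg_before_double_zero:
  fixes d d' :: "real \<Rightarrow> real"
  assumes deriv: "\<And>x. (d has_real_derivative d' x) (at x)"
    and "(d' has_real_derivative l) (at \<tau>)" "l < 0" "d \<tau> = 0" "d' \<tau> = 0"
  shows "\<exists>e>0. \<forall>h. 0 < h \<and> h < e \<longrightarrow> d (\<tau> - h) < 0"
proof -
  obtain e where e: "0 < e" "\<And>h. 0 < h \<Longrightarrow> h < e \<Longrightarrow> d' \<tau> < d' (\<tau> - h)"
    using DERIV_neg_dec_left[OF assms(2,3)] by blast
  have "d (\<tau> - h) < d \<tau>" if "0 < h" "h < e" for h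
  proof (rule DERIV_pos_imp_increasing_open[of "\<tau> - h" \<tau> d])
    fix z assume "\<tau> - h < z" "z < \<tau>"
    then show "\<exists>y. (d has_real_derivative y) (at z) \<and> 0 < y"
      using e(2)[of "\<tau> - z"] that deriv[of z] \<open>d' \<tau> = 0\<close> by auto
  next
    show "continuous_on {\<tau> - h..\<tau>} d"
      using deriv by (meson DERIV_isCont continuous_at_imp_continuous_on)
  qed (use that in simp)
  then show ?thesis
    using e(1) \<open>d \<tau> = 0\<close> by auto
qed

lemma exists_neg_if_deriv_le_neg:
  fixes f f' :: "real \<Rightarrow> real"
  assumes "\<And>t. a \<le> t \<Longrightarrow> (f has_real_derivative f' t) (at t)"
    and "\<And>t. a \<le> t \<Longrightarrow> f' t \<le> - m" and "0 < m"
  shows "\<exists>T\<ge>a. f T < 0"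
proof -
  define T where "T = a + (\<bar>f a\<bar> + 1) / m"
  have "a \<le> T"
    using \<open>0 < m\<close> by (simp add: T_def)
  have "f T + m * T \<le> f a + m * a"
  proof (rule DERIV_nonpos_imp_nonincreasing[of a T "\<lambda>t. f t + m * t", OF \<open>a \<le> T\<close>])
    fix t assume "a \<le> t"
    then show "\<exists>y. ((\<lambda>t. f t + m * t) has_real_derivative y) (at t) \<and> y \<le> 0"
      using assms(1,2)[of t] by (intro exI[of _ "f' t + m"]) (auto intro!: derivative_eq_intros)
  qed
  moreover have "m * T = m * a + \<bar>f a\<bar> + 1"
    using \<open>0 < m\<close> by (simp add: T_def field_simps)
  ultimately show ?thesis
    using \<open>a \<le> T\<close> by (intro exI[of _ T]) auto
qed

section \<open>Uniqueness, symmetries and energy of solutions\<close>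

definition solves :: "(real \<Rightarrow> real) \<Rightarrow> (real \<Rightarrow> real) \<Rightarrow> bool" where
  "solves q p \<longleftrightarrow>
     (\<forall>t. (q has_real_derivative p t) (at t)) \<and> (\<forall>t. (p has_real_derivative - g' (q t)) (at t))"

lemma is_global_solution_iff: "is_global_solution p0 q p \<longleftrightarrow> solves q p \<and> q 0 = 0 \<and> p 0 = p0"
  by (auto simp: is_global_solution_def solves_def deriv_g)

lemma solves_isCont:
  assumes "solves q p"
  shows "isCont q t" "isCont p t"
  using assms DERIV_isCont unfolding solves_def by blast+

lemma solves_reflect:
  assumes "solves q p"
  shows "solves (\<lambda>s. q (c - s)) (\<lambda>s. - p (c - s))"
  unfolding solves_def
proof (intro conjI allI)
  fix t
  have "((\<lambda>s. q (c - s)) has_real_derivative p (c - t) * (-1)) (at t)"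
    using assms unfolding solves_def
    by (intro DERIV_chain2[of q]) (auto intro!: derivative_eq_intros)
  then show "((\<lambda>s. q (c - s)) has_real_derivative - p (c - t)) (at t)"
    by simp
  have "((\<lambda>s. p (c - s)) has_real_derivative - g' (q (c - t)) * (-1)) (at t)"
    using assms unfolding solves_def
    by (intro DERIV_chain2[of p]) (auto intro!: derivative_eq_intros)
  then show "((\<lambda>s. - p (c - s)) has_real_derivative - g' (q (c - t))) (at t)"
    using DERIV_minus by fastforce
qed

lemma solves_uminus_shift:
  assumes "solves q p"
  shows "solves (\<lambda>s. - q (s + c)) (\<lambda>s. - p (s + c))"
  unfolding solves_def
proof (intro conjI allI)
  fix t
  have "((\<lambda>s. q (s + c)) has_real_derivative p (t + c) * 1) (at t)"
    using assms unfolding solves_def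
    by (intro DERIV_chain2[of q]) (auto intro!: derivative_eq_intros)
  then show "((\<lambda>s. - q (s + c)) has_real_derivative - p (t + c)) (at t)"
    using DERIV_minus by fastforce
  have "((\<lambda>s. p (s + c)) has_real_derivative - g' (q (t + c)) * 1) (at t)"
    using assms unfolding solves_def
    by (intro DERIV_chain2[of p]) (auto intro!: derivative_eq_intros)
  then show "((\<lambda>s. - p (s + c)) has_real_derivative - g' (- q (t + c))) (at t)"
    using DERIV_minus by (fastforce simp: g'_minus)
qed

lemma solves_unique:
  assumes sol1: "solves q1 p1" and sol2: "solves q2 p2"
    and "q1 t0 = q2 t0" "p1 t0 = p2 t0"
  shows "q1 t = q2 t \<and> p1 t = p2 t"
proof -
  define u where "u t = (q1 t - q2 t)\<^sup>2 + (p1 t - p2 t)\<^sup>2" for t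
  define u' where "u' t = 2 * (q1 t - q2 t) * (p1 t - p2 t) + 2 * (p1 t - p2 t) * (g' (q2 t) - g' (q1 t))"
    for t
  have deriv: "(u has_real_derivative u' t) (at t)" for t
    using sol1 sol2 unfolding solves_def u_def u'_def
    by (auto intro!: derivative_eq_intros simp: algebra_simps)
  have bound: "\<bar>u' t\<bar> \<le> 57 * u t" for t
  proof -
    let ?a = "\<bar>q1 t - q2 t\<bar>" and ?b = "\<bar>p1 t - p2 t\<bar>"
    have "\<bar>u' t\<bar> \<le> \<bar>2 * (q1 t - q2 t) * (p1 t - p2 t)\<bar> + \<bar>2 * (p1 t - p2 t) * (g' (q2 t) - g' (q1 t))\<bar>"
      unfolding u'_def by (rule abs_triangle_ineq)
    also have "\<dots> = 2 * ?a * ?b + 2 * ?b * \<bar>g' (q2 t) - g' (q1 t)\<bar>"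
      by (simp only: abs_mult abs_numeral)
    also have "\<dots> \<le> 2 * ?a * ?b + 2 * ?b * (56 * ?a)"
      using g'_lipschitz[of "q2 t" "q1 t"] abs_minus_commute[of "q1 t"]
      by (intro add_left_mono mult_left_mono) auto
    also have "\<dots> = 57 * (2 * ?a * ?b)"
      by simp
    also have "2 * ?a * ?b \<le> u t"
      unfolding u_def using sum_squares_bound[of ?a ?b] by (simp add: power2_abs)
    finally show ?thesis
      by simp
  qed
  have "0 \<le> u s" for s
    by (simp add: u_def)
  moreover have "u t0 = 0"
    using assms by (simp add: u_def)
  ultimately have "u t = 0"
    by (rule gronwall_eq_0[OF deriv bound])
  then show ?thesis
    unfolding u_def by (simp add: add_nonneg_eq_0_iff)
qed

lemma energy_conserved:
  assumes "is_global_solution p0 q p"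
  shows "(p t)\<^sup>2 + 2 * g (q t) = p0\<^sup>2"
proof -
  have "((\<lambda>t. (p t)\<^sup>2 + 2 * g (q t)) has_real_derivative 0) (at t)" for t
  proof -
    have "((\<lambda>t. (p t)\<^sup>2 + 2 * g (q t)) has_real_derivative
        2 * p t * (- g' (q t)) + 2 * (g' (q t) * p t)) (at t)"
      using assms unfolding is_global_solution_iff solves_def
      by (auto intro!: derivative_eq_intros DERIV_chain2[OF has_real_derivative_g] simp: power2_eq_square)
    then show ?thesis
      by (simp add: algebra_simps)
  qed
  then have "(p t)\<^sup>2 + 2 * g (q t) = (p 0)\<^sup>2 + 2 * g (q 0)"
    using DERIV_isconst_all[of "\<lambda>t. (p t)\<^sup>2 + 2 * g (q t)"] by blast
  then show ?thesis
    using assms by (simp add: is_global_solution_def g_def)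
qed

section \<open>Comparison while the faster solution moves forward\<close>

lemma speed_pos_if_energy_ge_2:
  assumes sol: "is_global_solution p0 q p" and "0 < p0" "2 \<le> p0\<^sup>2" "0 \<le> t"
  shows "0 < p t"
proof (rule ccontr)
  assume "\<not> 0 < p t"
  then obtain s where "p s = 0"
    using first_zero_exists[of p 0 t] solves_isCont assms by (auto simp: is_global_solution_iff)
  then have "2 * g (q s) = p0\<^sup>2"
    using energy_conserved[OF sol, of s] by simp
  then have "1 \<le> \<bar>q s\<bar>"
    using g_less_1[of "q s"] \<open>2 \<le> p0\<^sup>2\<close> by linarith
  then have equilibrium: "solves (\<lambda>_. q s) (\<lambda>_. 0)"
    by (simp add: solves_def g'_eq_0)
  have "solves q p"
    using sol by (simp add: is_global_solution_iff)
  then have "q 0 = q s"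
    using solves_unique[OF _ equilibrium, of q p s 0] \<open>p s = 0\<close> by simp
  then show False
    using \<open>1 \<le> \<bar>q s\<bar>\<close> sol by (simp add: is_global_solution_def)
qed

lemma less_while_speed_pos:
  assumes sol: "is_global_solution p0 q p" and sol': "is_global_solution p0' q' p'"
    and "0 < p0" "p0 < p0'"
    and speed: "\<And>s. 0 \<le> s \<Longrightarrow> s < b \<Longrightarrow> 0 < p' s"
    and "0 < t" "t < b"
  shows "q t < q' t"
proof -
  have "0 < q' t - q t"
  proof (rule pos_if_zeros_are_upcrossings[where d = "\<lambda>t. q' t - q t" and a = 0 and b = b])
    show "((\<lambda>t. q' t - q t) has_real_derivative p' t - p t) (at t)" for t
      using sol sol' by (auto intro!: derivative_eq_intros simp: is_global_solution_iff solves_def)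
    show "q' 0 - q 0 = 0"
      using sol sol' by (simp add: is_global_solution_def)
    fix s assume s: "0 \<le> s" "s < b" "q' s - q s = 0"
    have "p0\<^sup>2 < p0'\<^sup>2"
      using \<open>0 < p0\<close> \<open>p0 < p0'\<close> by (simp add: power_strict_mono)
    then have "(p s)\<^sup>2 < (p' s)\<^sup>2"
      using energy_conserved[OF sol, of s] energy_conserved[OF sol', of s] s(3) by simp
    then show "0 < p' s - p s"
      using power2_less_imp_less[of "p s" "p' s"] speed[OF s(1,2)] by simp
  qed (use assms in auto)
  then show ?thesis
    by simp
qed

section \<open>Oscillating solutions\<close>

lemma abs_less_1_if_energy_less_2:
  assumes "is_global_solution p0 q p" "p0\<^sup>2 < 2"
  shows "\<bar>q t\<bar> < 1"
  using energy_conserved[OF assms(1), of t] assms(2) g_eq_1[of "q t"]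
  by (smt (verit) zero_le_power2)

lemma restoring_force_ge:
  assumes sol: "is_global_solution p0 q p" and "p0\<^sup>2 < 2" and "0 \<le> a" "a \<le> q t"
  shows "8 * a * (1 - p0\<^sup>2 / 2) \<le> g' (q t)"
proof -
  have q: "\<bar>q t\<bar> < 1"
    using abs_less_1_if_energy_less_2[OF sol \<open>p0\<^sup>2 < 2\<close>] .
  then have "0 \<le> 1 - (q t)\<^sup>2" "1 - (q t)\<^sup>2 \<le> 1"
    by (auto simp: abs_square_le_1 less_imp_le)
  then have "(1 - (q t)\<^sup>2) ^ 4 \<le> (1 - (q t)\<^sup>2) ^ 3"
    by (intro power_decreasing) auto
  moreover have "2 * g (q t) \<le> p0\<^sup>2"
    using energy_conserved[OF sol, of t] zero_le_power2[of "p t"] by linarith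
  then have "1 - p0\<^sup>2 / 2 \<le> (1 - (q t)\<^sup>2) ^ 4"
    using q by (simp add: g_def)
  ultimately have "8 * a * (1 - p0\<^sup>2 / 2) \<le> 8 * q t * (1 - (q t)\<^sup>2) ^ 3"
    using assms by (intro mult_mono) auto
  then show ?thesis
    using q by (simp add: g'_def)
qed

lemma speed_vanishes_if_energy_less_2:
  assumes sol: "is_global_solution p0 q p" and "0 < p0" "p0\<^sup>2 < 2"
  shows "\<exists>t>0. p t = 0"
proof (rule ccontr)
  assume "\<not> (\<exists>t>0. p t = 0)"
  then have speed: "0 < p t" if "0 \<le> t" for t
    using first_zero_exists[of p 0 t] solves_isCont sol \<open>0 < p0\<close> that
    by (force simp: is_global_solution_iff)
  have dq: "(q has_real_derivative p t) (at t)" and dp: "(p has_real_derivative - g' (q t)) (at t)" for t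
    using sol by (simp_all add: is_global_solution_iff solves_def)
  have "q 0 < q 1"
    using speed dq by (intro DERIV_pos_imp_increasing[of 0 1 q]) auto
  then have "0 < q 1"
    using sol by (simp add: is_global_solution_def)
  have qmono: "q 1 \<le> q t" if "1 \<le> t" for t
  proof (rule DERIV_nonneg_imp_nondecreasing[OF that])
    fix x :: real
    assume "1 \<le> x"
    then show "\<exists>y. (q has_real_derivative y) (at x) \<and> 0 \<le> y"
      using dq[of x] speed[of x] by (intro exI[of _ "p x"]) auto
  qed
  define m where "m = 8 * q 1 * (1 - p0\<^sup>2 / 2)"
  have "0 < m"
    using \<open>0 < q 1\<close> \<open>p0\<^sup>2 < 2\<close> by (simp add: m_def)
  have force: "m \<le> g' (q t)" if "1 \<le> t" for t
    using restoring_force_ge[OF sol \<open>p0\<^sup>2 < 2\<close>, of "q 1" t] \<open>0 < q 1\<close> qmono[OF that]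
    by (simp add: m_def)
  obtain T where "1 \<le> T" "p T < 0"
    using exists_neg_if_deriv_le_neg[of 1 p "\<lambda>t. - g' (q t)" m] dp force \<open>0 < m\<close> by auto
  then show False
    using speed[of T] by simp
qed

definition first_turning_time :: "(real \<Rightarrow> real) \<Rightarrow> real \<Rightarrow> bool" where
  "first_turning_time p \<tau> \<longleftrightarrow> 0 < \<tau> \<and> p \<tau> = 0 \<and> (\<forall>t. 0 \<le> t \<and> t < \<tau> \<longrightarrow> 0 < p t)"

lemma first_turning_time_exists:
  assumes sol: "is_global_solution p0 q p" and "0 < p0" "p0\<^sup>2 < 2"
  shows "\<exists>\<tau>. first_turning_time p \<tau>"
proof -
  obtain t where "0 < t" "p t = 0"
    using speed_vanishes_if_energy_less_2[OF assms] by blast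
  moreover have "isCont p s" "p 0 = p0" for s
    using sol solves_isCont by (auto simp: is_global_solution_iff)
  ultimately obtain \<tau> where "0 < \<tau>" "p \<tau> = 0" "\<forall>s. 0 \<le> s \<and> s < \<tau> \<longrightarrow> 0 < p s"
    using first_zero_exists[of p 0 t] \<open>0 < p0\<close> by auto
  then show ?thesis
    unfolding first_turning_time_def by blast
qed

lemma strict_mono_on_until_turning:
  assumes "solves q p" "first_turning_time p \<tau>"
  shows "strict_mono_on {0..\<tau>} q"
proof (rule strict_mono_onI)
  fix x y assume xy: "x \<in> {0..\<tau>}" "y \<in> {0..\<tau>}" "x < y"
  show "q x < q y"
  proof (rule DERIV_pos_imp_increasing_open[OF \<open>x < y\<close>])
    fix z assume "x < z" "z < y"
    then show "\<exists>d. (q has_real_derivative d) (at z) \<and> 0 < d"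
      using assms xy by (auto simp: solves_def first_turning_time_def)
  next
    show "continuous_on {x..y} q"
      using solves_isCont[OF assms(1)] by (simp add: continuous_at_imp_continuous_on)
  qed
qed

lemma solves_symmetric_around_turning:
  assumes "solves q p" "p \<tau> = 0"
  shows "q (2 * \<tau> - t) = q t" "p (2 * \<tau> - t) = - p t"
  using solves_unique[OF solves_reflect[OF assms(1), of "2 * \<tau>"] assms(1), of \<tau> t] assms(2)
  by simp_all

lemma solves_antiperiodic:
  assumes "solves q p" "q c = - q 0" "p c = - p 0"
  shows "q (t + c) = - q t"
  using solves_unique[OF solves_uminus_shift[OF assms(1), of c] assms(1), of 0 t] assms(2,3)
  by simp

lemma half_period_antiperiodic:
  assumes sol: "is_global_solution p0 q p" and turn: "first_turning_time p \<tau>"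
  shows "q (t + 2 * \<tau>) = - q t"
proof -
  have "solves q p" "p \<tau> = 0"
    using assms by (simp_all add: is_global_solution_iff first_turning_time_def)
  then show ?thesis
    using solves_antiperiodic solves_symmetric_around_turning[of q p \<tau> 0] sol
    by (simp add: is_global_solution_iff)
qed

lemma pos_before_half_period:
  assumes sol: "is_global_solution p0 q p" and turn: "first_turning_time p \<tau>"
    and "0 < t" "t < 2 * \<tau>"
  shows "0 < q t"
proof -
  have "solves q p" "p \<tau> = 0" "q 0 = 0"
    using assms by (simp_all add: is_global_solution_iff first_turning_time_def)
  have rising: "0 < q s" if "0 < s" "s \<le> \<tau>" for s
    using strict_mono_onD[OF strict_mono_on_until_turning[OF \<open>solves q p\<close> turn], of 0 s] that \<open>q 0 = 0\<close>
    by simp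
  show ?thesis
  proof (cases "t \<le> \<tau>")
    case False
    then show ?thesis
      using rising[of "2 * \<tau> - t"] solves_symmetric_around_turning[OF \<open>solves q p\<close> \<open>p \<tau> = 0\<close>, of t] assms(4)
      by simp
  qed (use rising assms(3) in simp)
qed

lemma smallest_period_eq_4_turning_time:
  assumes sol: "is_global_solution p0 q p" and turn: "first_turning_time p \<tau>"
  shows "smallest_period q = 4 * \<tau>"
  unfolding smallest_period_def
proof (rule Least_equality)
  have "0 < \<tau>"
    using turn by (simp add: first_turning_time_def)
  moreover have "q (t + 4 * \<tau>) = q t" for t
    using half_period_antiperiodic[OF sol turn, of t] half_period_antiperiodic[OF sol turn, of "t + 2 * \<tau>"]
    by (simp add: algebra_simps)
  ultimately show "0 < 4 * \<tau> \<and> (\<forall>t. q (t + 4 * \<tau>) = q t)"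
    by simp
next
  fix T assume T: "0 < T \<and> (\<forall>t. q (t + T) = q t)"
  show "4 * \<tau> \<le> T"
  proof (rule ccontr)
    assume "\<not> 4 * \<tau> \<le> T"
    have "q T = 0"
      using T sol by (metis add_0 is_global_solution_def)
    have neg: "q t < 0" if "2 * \<tau> < t" "t < 4 * \<tau>" for t
      using pos_before_half_period[OF sol turn, of "t - 2 * \<tau>"] half_period_antiperiodic[OF sol turn, of "t - 2 * \<tau>"] that
      by simp
    consider "T < 2 * \<tau>" | "T = 2 * \<tau>" | "2 * \<tau> < T"
      by linarith
    then show False
    proof cases
      case 1
      then show False
        using pos_before_half_period[OF sol turn, of T] T \<open>q T = 0\<close> by simp
    next
      case 2
      then show False
        using T[THEN conjunct2, rule_format, of \<tau>] half_period_antiperiodic[OF sol turn, of \<tau>]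
          pos_before_half_period[OF sol turn, of \<tau>] turn
        by (simp add: first_turning_time_def)
    next
      case 3
      then show False
        using neg[of T] \<open>\<not> 4 * \<tau> \<le> T\<close> \<open>q T = 0\<close> by simp
    qed
  qed
qed

lemma amplitude_bounds:
  assumes sol: "is_global_solution p0 q p" and "0 < p0" "p0\<^sup>2 < 2" and turn: "first_turning_time p \<tau>"
  shows "0 < q \<tau>" "q \<tau> < 1" "2 * g (q \<tau>) = p0\<^sup>2"
proof -
  show "0 < q \<tau>"
    using pos_before_half_period[OF sol turn, of \<tau>] turn by (simp add: first_turning_time_def)
  show "q \<tau> < 1"
    using abs_less_1_if_energy_less_2[OF sol \<open>p0\<^sup>2 < 2\<close>, of \<tau>] by simp
  show "2 * g (q \<tau>) = p0\<^sup>2"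
    using energy_conserved[OF sol, of \<tau>] turn by (simp add: first_turning_time_def)
qed

section \<open>The larger oscillation turns later\<close>

lemma quartic_gap_ratio_strict_antimono:
  fixes a a' v :: real
  assumes "0 \<le> v" "v < 1" "0 < a" "a < a'" "a' < 1"
  shows "((1 - a' * v) ^ 4 - (1 - a') ^ 4) / a' < ((1 - a * v) ^ 4 - (1 - a) ^ 4) / a"
proof -
  \<comment> \<open>x^4 - y^4 = (x - y) (x^3 + x^2 y + x y^2 + y^3), here with x - y = b (1 - v)\<close>
  define S where "S b = (1 - b * v) ^ 3 + (1 - b * v)\<^sup>2 * (1 - b) + (1 - b * v) * (1 - b)\<^sup>2 + (1 - b) ^ 3"
    for b :: real
  have ratio: "((1 - b * v) ^ 4 - (1 - b) ^ 4) / b = (1 - v) * S b" if "0 < b" for b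
  proof -
    have "(1 - b * v) ^ 4 - (1 - b) ^ 4 = b * (1 - v) * S b"
      by (simp add: S_def algebra_simps power2_eq_square power3_eq_cube power4_eq_xxxx)
    then show ?thesis
      using that by simp
  qed
  have "a' * v \<le> v"
    using assms by (simp add: mult_left_le_one_le)
  then have inner: "0 < 1 - a' * v" "1 - a' * v \<le> 1 - a * v"
    using assms by (auto intro: mult_right_mono)
  have outer: "0 < 1 - a'" "1 - a' < 1 - a"
    using assms by auto
  have "(1 - a' * v) ^ 3 \<le> (1 - a * v) ^ 3"
    using inner by (intro power_mono) auto
  moreover have "(1 - a' * v)\<^sup>2 * (1 - a') \<le> (1 - a * v)\<^sup>2 * (1 - a)"
    using inner outer by (intro mult_mono power_mono) auto
  moreover have "(1 - a' * v) * (1 - a')\<^sup>2 \<le> (1 - a * v) * (1 - a)\<^sup>2"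
    using inner outer by (intro mult_mono power_mono) auto
  moreover have "(1 - a') ^ 3 < (1 - a) ^ 3"
    using outer by (intro power_strict_mono) auto
  ultimately have "(1 - v) * S a' < (1 - v) * S a"
    using \<open>v < 1\<close> unfolding S_def by simp
  then show ?thesis
    using ratio[of a] ratio[of a'] assms by simp
qed

lemma scaled_speed_sq:
  assumes sol: "is_global_solution p0 q p" and "2 * g a = p0\<^sup>2" "0 < a" "a < 1"
    and "q x = a * u" "0 \<le> u" "u < 1"
  shows "(p x / a)\<^sup>2 = 2 * (((1 - a\<^sup>2 * u\<^sup>2) ^ 4 - (1 - a\<^sup>2) ^ 4) / a\<^sup>2)"
proof -
  have "a * u < 1"
    using assms mult_strict_mono[of a 1 u 1] by simp
  then have "(p x)\<^sup>2 = 2 * ((1 - a\<^sup>2 * u\<^sup>2) ^ 4 - (1 - a\<^sup>2) ^ 4)"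
    using energy_conserved[OF sol, of x] assms by (simp add: g_def power_mult_distrib)
  then show ?thesis
    by (simp add: power_divide)
qed

lemma amplitude_less:
  assumes sol: "is_global_solution p0 q p" and sol': "is_global_solution p0' q' p'"
    and "0 < p0" "p0 < p0'" "p0'\<^sup>2 < 2"
    and turn: "first_turning_time p \<tau>" and turn': "first_turning_time p' \<tau>'"
  shows "q \<tau> < q' \<tau>'"
proof -
  have "p0\<^sup>2 < p0'\<^sup>2"
    using \<open>0 < p0\<close> \<open>p0 < p0'\<close> by (simp add: power_strict_mono)
  then have "p0\<^sup>2 < 2"
    using \<open>p0'\<^sup>2 < 2\<close> by simp
  have "2 * g (q \<tau>) = p0\<^sup>2" "0 < q' \<tau>'" "2 * g (q' \<tau>') = p0'\<^sup>2"
    using amplitude_bounds[OF sol \<open>0 < p0\<close> \<open>p0\<^sup>2 < 2\<close> turn] amplitude_bounds[OF sol' _ \<open>p0'\<^sup>2 < 2\<close> turn'] assms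
    by simp_all
  show ?thesis
  proof (rule ccontr)
    assume "\<not> q \<tau> < q' \<tau>'"
    then have "g (q' \<tau>') \<le> g (q \<tau>)"
      using g_mono_on_unit_interval[of "q' \<tau>'" "q \<tau>"] amplitude_bounds(2)[OF sol \<open>0 < p0\<close> \<open>p0\<^sup>2 < 2\<close> turn]
        \<open>0 < q' \<tau>'\<close> by simp
    then show False
      using \<open>p0\<^sup>2 < p0'\<^sup>2\<close> \<open>2 * g (q \<tau>) = p0\<^sup>2\<close> \<open>2 * g (q' \<tau>') = p0'\<^sup>2\<close> by simp
  qed
qed

lemma scaled_speed_less:
  assumes sol: "is_global_solution p0 q p" and sol': "is_global_solution p0' q' p'"
    and "0 < p0" "p0 < p0'" "p0'\<^sup>2 < 2"
    and turn: "first_turning_time p \<tau>" and turn': "first_turning_time p' \<tau>'"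
    and "0 \<le> x" "x < \<tau>" and same_position: "q x / q \<tau> = q' x / q' \<tau>'"
  shows "p' x / q' \<tau>' < p x / q \<tau>"
proof -
  have "p0\<^sup>2 < p0'\<^sup>2"
    using \<open>0 < p0\<close> \<open>p0 < p0'\<close> by (simp add: power_strict_mono)
  then have "p0\<^sup>2 < 2"
    using \<open>p0'\<^sup>2 < 2\<close> by simp
  define A A' where "A = q \<tau>" and "A' = q' \<tau>'"
  have A: "0 < A" "A < 1" "2 * g A = p0\<^sup>2"
    using amplitude_bounds[OF sol \<open>0 < p0\<close> \<open>p0\<^sup>2 < 2\<close> turn] by (simp_all add: A_def)
  have A': "0 < A'" "A' < 1" "2 * g A' = p0'\<^sup>2"
    using amplitude_bounds[OF sol' _ \<open>p0'\<^sup>2 < 2\<close> turn'] assms by (simp_all add: A'_def)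
  have "A < A'"
    using amplitude_less[OF assms(1-7)] by (simp add: A_def A'_def)
  define u where "u = q x / A"
  have mono: "strict_mono_on {0..\<tau>} q"
    using strict_mono_on_until_turning[OF _ turn] sol by (simp add: is_global_solution_iff)
  have "q 0 \<le> q x" "q x < A"
    using strict_mono_on_leD[OF mono, of 0 x] strict_mono_onD[OF mono, of x \<tau>] \<open>0 \<le> x\<close> \<open>x < \<tau>\<close>
    by (simp_all add: A_def)
  then have "0 \<le> u" "u < 1"
    using A(1) sol by (simp_all add: u_def is_global_solution_def)
  moreover have "q x = A * u" "q' x = A' * u"
    using A(1) A'(1) same_position by (simp_all add: u_def A_def A'_def field_simps)
  ultimately have u: "q x = A * u" "q' x = A' * u" "0 \<le> u" "u < 1"
    by simp_all
  have "0 \<le> u\<^sup>2" "u\<^sup>2 < 1" "0 < A\<^sup>2" "A\<^sup>2 < A'\<^sup>2" "A'\<^sup>2 < 1"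
    using A A' u \<open>A < A'\<close> by (auto intro: power_strict_mono simp: abs_square_less_1)
  then have "(p' x / A')\<^sup>2 < (p x / A)\<^sup>2"
    using scaled_speed_sq[OF sol A(3) A(1,2) u(1,3,4)] scaled_speed_sq[OF sol' A'(3) A'(1,2) u(2,3,4)]
      quartic_gap_ratio_strict_antimono[of "u\<^sup>2" "A\<^sup>2" "A'\<^sup>2"]
    by linarith
  moreover have "0 < p x / A"
    using turn A \<open>0 \<le> x\<close> \<open>x < \<tau>\<close> by (simp add: first_turning_time_def)
  ultimately show ?thesis
    unfolding A_def A'_def by (rule power2_less_imp_less[OF _ less_imp_le])
qed

lemma scaled_position_ahead:
  assumes sol: "is_global_solution p0 q p" and sol': "is_global_solution p0' q' p'"
    and "0 < p0" "p0 < p0'" "p0'\<^sup>2 < 2"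
    and turn: "first_turning_time p \<tau>" and turn': "first_turning_time p' \<tau>'"
    and "\<tau>' \<le> \<tau>" "0 < x" "x < \<tau>'"
  shows "q' x / q' \<tau>' < q x / q \<tau>"
proof -
  have "q \<tau> \<noteq> 0" "q' \<tau>' \<noteq> 0"
    using pos_before_half_period[OF sol turn, of \<tau>] pos_before_half_period[OF sol' turn', of \<tau>'] turn turn'
    by (auto simp: first_turning_time_def)
  have "0 < q x / q \<tau> - q' x / q' \<tau>'"
  proof (rule pos_if_zeros_are_upcrossings[where d = "\<lambda>x. q x / q \<tau> - q' x / q' \<tau>'" and a = 0 and b = \<tau>'])
    show "((\<lambda>x. q x / q \<tau> - q' x / q' \<tau>') has_real_derivative p s / q \<tau> - p' s / q' \<tau>') (at s)" for s
      using sol sol' \<open>q \<tau> \<noteq> 0\<close> \<open>q' \<tau>' \<noteq> 0\<close>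
      by (auto intro!: derivative_eq_intros simp: is_global_solution_iff solves_def)
    show "q 0 / q \<tau> - q' 0 / q' \<tau>' = 0"
      using sol sol' by (simp add: is_global_solution_def)
    show "0 < p s / q \<tau> - p' s / q' \<tau>'" if "0 \<le> s" "s < \<tau>'" "q s / q \<tau> - q' s / q' \<tau>' = 0" for s
      using scaled_speed_less[OF assms(1-7), of s] that \<open>\<tau>' \<le> \<tau>\<close> by simp
  qed (use assms in auto)
  then show ?thesis
    by simp
qed

lemma turning_time_less:
  assumes sol: "is_global_solution p0 q p" and sol': "is_global_solution p0' q' p'"
    and "0 < p0" "p0 < p0'" "p0'\<^sup>2 < 2"
    and turn: "first_turning_time p \<tau>" and turn': "first_turning_time p' \<tau>'"
  shows "\<tau> < \<tau>'"
proof (rule ccontr)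
  assume "\<not> \<tau> < \<tau>'"
  define A A' where "A = q \<tau>" and "A' = q' \<tau>'"
  have "0 < p0'"
    using assms by simp
  have A: "0 < A" "A < A'" "A' < 1"
    using pos_before_half_period[OF sol turn, of \<tau>] turn amplitude_bounds(2)[OF sol' \<open>0 < p0'\<close> \<open>p0'\<^sup>2 < 2\<close> turn']
      amplitude_less[OF assms]
    by (simp_all add: A_def A'_def first_turning_time_def)
  define d d' where "d x = q x / A - q' x / A'" and "d' x = p x / A - p' x / A'" for x
  have deriv_d: "(d has_real_derivative d' x) (at x)" for x
    using sol sol' A unfolding d_def d'_def
    by (auto intro!: derivative_eq_intros simp: is_global_solution_iff solves_def)
  have deriv_d': "(d' has_real_derivative - g' (q x) / A + g' (q' x) / A') (at x)" for x
    using sol sol' A unfolding d'_def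
    by (auto intro!: derivative_eq_intros simp: is_global_solution_iff solves_def)
  have pos: "0 < d x" if "0 < x" "x < \<tau>'" for x
    using scaled_position_ahead[OF assms, of x] that \<open>\<not> \<tau> < \<tau>'\<close> by (simp add: d_def A_def A'_def)
  have "0 < \<tau>'" "p' \<tau>' = 0"
    using turn' by (simp_all add: first_turning_time_def)
  consider "\<tau>' < \<tau>" | "\<tau>' = \<tau>"
    using \<open>\<not> \<tau> < \<tau>'\<close> by linarith
  then show False
  proof cases
    case 1
    have "strict_mono_on {0..\<tau>} q"
      using strict_mono_on_until_turning[OF _ turn] sol by (simp add: is_global_solution_iff)
    then have "q \<tau>' < A"
      using strict_mono_onD[of "{0..\<tau>}" q \<tau>' \<tau>] 1 \<open>0 < \<tau>'\<close> by (simp add: A_def)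
    then have "d \<tau>' < 0"
      using A by (simp add: d_def A'_def)
    moreover have "0 < d (\<tau>' / 2)"
      using pos \<open>0 < \<tau>'\<close> by simp
    moreover have "isCont d x" for x
      using deriv_d DERIV_isCont by blast
    ultimately obtain y where "\<tau>' / 2 \<le> y" "y \<le> \<tau>'" "d y = 0"
      using IVT2[of d \<tau>' 0 "\<tau>' / 2"] \<open>0 < \<tau>'\<close> by force
    then show False
      using pos[of y] \<open>d \<tau>' < 0\<close> \<open>0 < \<tau>'\<close> by (cases "y = \<tau>'") auto
  next
    case 2
    have "d \<tau> = 0" "d' \<tau> = 0"
      using turn 2 \<open>p' \<tau>' = 0\<close> A by (simp_all add: d_def d'_def A_def A'_def first_turning_time_def)
    have "(1 - A'\<^sup>2) ^ 3 < (1 - A\<^sup>2) ^ 3"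
      using A by (intro power_strict_mono) (auto intro: power_strict_mono simp: abs_square_le_1)
    then have "- g' (q \<tau>) / A + g' (q' \<tau>) / A' < 0"
      using A 2 by (simp add: g'_def A_def A'_def)
    then obtain e where "0 < e" and neg: "\<forall>h. 0 < h \<and> h < e \<longrightarrow> d (\<tau> - h) < 0"
      using neg_before_double_zero[OF deriv_d deriv_d'] \<open>d \<tau> = 0\<close> \<open>d' \<tau> = 0\<close> by blast
    have "0 < min e \<tau> / 2" "min e \<tau> / 2 < e" "min e \<tau> / 2 < \<tau>"
      using \<open>0 < e\<close> \<open>0 < \<tau>'\<close> 2 by auto
    then show False
      using neg[rule_format, of "min e \<tau> / 2"] pos[of "\<tau> - min e \<tau> / 2"] 2 by auto
  qed
qed

lemma less_on_first_half_period:
  assumes sol: "is_global_solution p0 q p" and sol': "is_global_solution p0' q' p'"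
    and "0 < p0" "p0 < p0'" "p0'\<^sup>2 < 2"
    and turn: "first_turning_time p \<tau>" and turn': "first_turning_time p' \<tau>'"
    and "0 < t" "t \<le> 2 * \<tau>"
  shows "q t < q' t"
proof -
  have "\<tau> < \<tau>'"
    by (rule turning_time_less[OF assms(1-7)])
  have before_turning: "q s < q' s" if "0 < s" "s < \<tau>'" for s
    using less_while_speed_pos[OF sol sol' \<open>0 < p0\<close> \<open>p0 < p0'\<close>, of \<tau>'] turn' that
    by (auto simp: first_turning_time_def)
  show ?thesis
  proof (cases "t < \<tau>'")
    case True
    then show ?thesis
      using before_turning \<open>0 < t\<close> by blast
  next
    case False
    \<comment> \<open>q t = q r \<le> q' r < q' r' = q' t by symmetry around the turning times\<close>
    define r r' where "r = 2 * \<tau> - t" and "r' = 2 * \<tau>' - t"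
    have r: "0 \<le> r" "r < \<tau>'" "r < r'" "r' \<le> \<tau>'"
      using False \<open>t \<le> 2 * \<tau>\<close> \<open>\<tau> < \<tau>'\<close> by (auto simp: r_def r'_def)
    have sols: "solves q p" "solves q' p'" and "p \<tau> = 0" "p' \<tau>' = 0"
      using assms by (simp_all add: is_global_solution_iff first_turning_time_def)
    then have "q t = q r" "q' t = q' r'"
      using solves_symmetric_around_turning(1)[OF sols(1) \<open>p \<tau> = 0\<close>, of t]
        solves_symmetric_around_turning(1)[OF sols(2) \<open>p' \<tau>' = 0\<close>, of t]
      by (simp_all add: r_def r'_def)
    moreover have "q r \<le> q' r"
      using before_turning[of r] r sol sol' by (cases "r = 0") (auto simp: is_global_solution_def)
    moreover have "q' r < q' r'"
      using strict_mono_onD[OF strict_mono_on_until_turning[OF sols(2) turn'], of r r'] r by simp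
    ultimately show ?thesis
      by simp
  qed
qed

theorem lemma5p15:
  fixes p0 p0' :: real and q p q' p' :: "real \<Rightarrow> real"
  assumes "0 < p0" "p0 < p0'" "p0' < 2"
    and "is_global_solution p0 q p"
    and "is_global_solution p0' q' p'"
  shows "(p0 < sqrt 2 \<longrightarrow> (\<forall>t. 0 < t \<and> t \<le> smallest_period q / 2 \<longrightarrow> q t < q' t))
       \<and> (sqrt 2 \<le> p0 \<longrightarrow> (\<forall>t. 0 < t \<longrightarrow> q t < q' t))"
proof -
  have "p0\<^sup>2 < p0'\<^sup>2"
    using assms by (simp add: power_strict_mono)
  have "0 < p0'"
    using assms by simp
  have fast: "q t < q' t" if "2 \<le> p0'\<^sup>2" "0 < t" for t
    using less_while_speed_pos[OF assms(4,5,1,2), of "t + 1" t] speed_pos_if_energy_ge_2[OF assms(5) \<open>0 < p0'\<close>]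
      that by simp
  have slow: "q t < q' t"
    if low: "p0'\<^sup>2 < 2" and t: "0 < t" "t \<le> smallest_period q / 2" for t
  proof -
    obtain \<tau> where "first_turning_time p \<tau>"
      using first_turning_time_exists[OF assms(4,1)] \<open>p0\<^sup>2 < p0'\<^sup>2\<close> low by auto
    moreover obtain \<tau>' where "first_turning_time p' \<tau>'"
      using first_turning_time_exists[OF assms(5) \<open>0 < p0'\<close> low] by blast
    ultimately show ?thesis
      using less_on_first_half_period[OF assms(4,5,1,2) low] smallest_period_eq_4_turning_time[OF assms(4)] t
      by simp
  qed
  have "p0 = sqrt (p0\<^sup>2)"
    using assms(1) by simp
  then have "p0 < sqrt 2 \<longleftrightarrow> p0\<^sup>2 < 2"
    by (metis real_sqrt_less_iff)
  then show ?thesis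
    using fast slow \<open>p0\<^sup>2 < p0'\<^sup>2\<close> by force
qed

end
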